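(* Let $\kappa$ be a cardinal and suppose there exists a family $\{N_\zeta:\zeta<\kappa\}$ of $\kappa$ pairwise almost disjoint subsets of $\mathfrak{c}$, each of cardinality $\mathfrak{c}$. Then the set $\mathcal{SZ}(\mathbb R)$ of Sierpi\'nski-Zygmund functions is strongly $\kappa$-algebrable in the algebra $\mathbb R^{\mathbb R}$.
   Context: $\mathfrak{c}$ denotes the cardinality of $\mathbb R$, identified with the first ordinal of that cardinality. Two subsets $A,B$ of $\mathfrak{c}$, each of cardinality $\mathfrak{c}$, are almost disjoint if $|A\cap B|<\mathfrak{c}$. A function $f:\mathbb R\to\mathbb R$ is a Sierpi\'nski-Zygmund function if for every set $Z\subset\mathbb R$ of cardinality $\mathfrak{c}$ the restriction $f|_Z$ is not a Borel map. $\mathbb R^{\mathbb R}$ is the commutative algebra of all functions $\mathbb R\to\mathbb R$ with pointwise operations. A subset $E$ of a commutative algebra $B$ is strongly $\kappa$-algebrable if there exists a $\kappa$-generated free algebra contained in $E\cup\{0\}$; equivalently, there is a set $X=\{x_\alpha:\alpha<\kappa\}\subset B$ (with $x_\alpha$ distinct) such that the set of all monomials $x_{\alpha_1}^{k_1}\cdots x_{\alpha_n}^{k_n}$ ($n\ge1$, distinct $\alpha_i$, $k_i\ge1$) is linearly independent and every nontrivial linear combination of such monomials lies in $E$ (i.e. for every nonzero polynomial $P$ without constant term and distinct $x_{\alpha_1},\dots,x_{\alpha_n}$, $P(x_{\alpha_1},\dots,x_{\alpha_n})$ is nonzero and belongs to $E$). *)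

theory Defs
  imports "HOL-Analysis.Analysis" "HOL-Library.Equipollence"
begin

definition SZ :: "(real \<Rightarrow> real) set" where
  "SZ = {f. \<forall>Z :: real set. eqpoll Z (UNIV :: real set) \<longrightarrow>
             f \<notin> measurable (restrict_space borel Z) borel}"

definition monomials :: "'k set \<Rightarrow> ('k \<Rightarrow> nat) set" where
  "monomials K = {m. finite {a. m a \<noteq> 0} \<and> {a. m a \<noteq> 0} \<subseteq> K \<and> m \<noteq> (\<lambda>_. 0)}"

definition eval_mono :: "('k \<Rightarrow> real \<Rightarrow> real) \<Rightarrow> ('k \<Rightarrow> nat) \<Rightarrow> real \<Rightarrow> real" where
  "eval_mono x m = (\<lambda>t. \<Prod>a\<in>{a. m a \<noteq> 0}. x a t ^ m a)"

text \<open>Real polynomials without constant term in the variables indexed by K,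
  represented by their finitely supported coefficient functions.\<close>
definition polys :: "'k set \<Rightarrow> (('k \<Rightarrow> nat) \<Rightarrow> real) set" where
  "polys K = {c. finite {m. c m \<noteq> 0} \<and> {m. c m \<noteq> 0} \<subseteq> monomials K}"

definition eval_poly :: "('k \<Rightarrow> real \<Rightarrow> real) \<Rightarrow> (('k \<Rightarrow> nat) \<Rightarrow> real) \<Rightarrow> real \<Rightarrow> real" where
  "eval_poly x c = (\<lambda>t. \<Sum>m\<in>{m. c m \<noteq> 0}. c m * eval_mono x m t)"

definition strongly_algebrable :: "(real \<Rightarrow> real) set \<Rightarrow> 'k set \<Rightarrow> bool" where
  "strongly_algebrable E K \<longleftrightarrow>
     (\<exists>x :: 'k \<Rightarrow> real \<Rightarrow> real. inj_on x K \<and>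
        (\<forall>c \<in> polys K. c \<noteq> (\<lambda>_. 0) \<longrightarrow> eval_poly x c \<noteq> (\<lambda>_. 0) \<and> eval_poly x c \<in> E))"

end

theory Submission
  imports Defs "HOL-Computational_Algebra.Polynomial" "HOL-Library.Countable_Set_Type"
begin

text \<open>
  Well-order \<open>\<real>\<close> in the order type of the continuum. There are only continuum many
  Borel codes, so there are functions \<open>g\<^sub>s\<close> (\<open>s \<in> \<real>\<close>) such that every Borel function on
  any set \<open>Z\<close> is the restriction of some \<open>g\<^sub>s\<close>. At each point \<open>t\<close>, the ring generated by
  the reals \<open>s\<close> and \<open>g\<^sub>s(t)\<close> for \<open>s \<le> t\<close> has fewer than continuum many elements, so
  transfinite recursion yields a family \<open>\<Phi>\<^sub>t\<close> indexed by \<open>\<real>\<close> that is algebraically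
  independent over it. With injections \<open>h\<^sub>\<zeta> : \<real> \<rightarrow> N\<^sub>\<zeta>\<close> put \<open>x\<^sub>\<zeta>(t) = \<Phi>\<^sub>t(h\<^sub>\<zeta>(t))\<close>.

  If a nonzero polynomial \<open>P\<close> in the \<open>x\<^sub>\<zeta>\<close> agreed with \<open>g\<^sub>s\<close> on a set \<open>Z\<close> of size
  continuum, pick \<open>t \<in> Z\<close> above \<open>s\<close> and the coefficients of \<open>P\<close>, and outside the fewer than
  continuum many points where two of the finitely many \<open>h\<^sub>\<zeta>\<close> involved agree (almost
  disjointness). Then \<open>P(x)(t) = g\<^sub>s(t)\<close> is a nontrivial algebraic relation among distinct
  members of \<open>\<Phi>\<^sub>t\<close> over a ring containing all its coefficients.
\<close>

unbundle cardinal_syntax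

section \<open>Sets of fewer than continuum many reals\<close>

abbreviation small :: "real set \<Rightarrow> bool" where
  "small S \<equiv> |S| <o |UNIV::real set|"

lemma infinite_UNIV_real: "\<not> finite (UNIV::real set)"
  by (simp add: infinite_UNIV_char_0)

lemma small_subset: "A \<subseteq> B \<Longrightarrow> small B \<Longrightarrow> small A"
  using card_of_mono1 ordLeq_ordLess_trans by blast

lemma small_Un: "small A \<Longrightarrow> small B \<Longrightarrow> small (A \<union> B)"
  using card_of_Un_ordLess_infinite infinite_UNIV_real by blast

lemma small_image: "small A \<Longrightarrow> small (f ` A)"
  using card_of_image ordLeq_ordLess_trans by blast

lemma small_finite: "finite A \<Longrightarrow> small A"
  by (rule finite_ordLess_infinite[OF card_of_Well_order card_of_Well_order])
    (simp_all add: Field_card_of infinite_UNIV_real)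

lemma small_UN_finite: "finite I \<Longrightarrow> (\<And>i. i \<in> I \<Longrightarrow> small (A i)) \<Longrightarrow> small (\<Union>i\<in>I. A i)"
  by (induction I rule: finite_induct) (auto simp: small_Un small_finite)

lemma countable_small: "countable A \<Longrightarrow> small A"
proof -
  assume "countable A"
  hence "|A| \<le>o |UNIV::nat set|" by (simp add: countable_card_of_nat)
  moreover have "\<not> |UNIV::real set| \<le>o |UNIV::nat set|"
    using uncountable_UNIV_real countable_card_of_nat by blast
  hence "|UNIV::nat set| <o |UNIV::real set|"
    by (simp add: not_ordLeq_iff_ordLess card_of_Well_order)
  ultimately show ?thesis using ordLeq_ordLess_trans by blast
qed

lemma lesspoll_small: "A \<prec> (UNIV::real set) \<Longrightarrow> small A"
  by (metis card_of_Well_order card_of_mono1 eqpoll_iff_card_of_ordIso lesspoll_def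
      not_ordLess_iff_ordLeq ordIso_iff_ordLeq subset_UNIV)

lemma eqpoll_UNIV_not_subset_small:
  assumes "small S" "Z \<approx> (UNIV::real set)"
  shows "\<exists>z\<in>Z. z \<notin> S"
proof (rule ccontr)
  assume "\<not> (\<exists>z\<in>Z. z \<notin> S)"
  hence "|Z| \<le>o |S|" by (intro card_of_mono1) auto
  moreover have "|UNIV::real set| =o |Z|"
    using assms(2) by (simp add: eqpoll_iff_card_of_ordIso ordIso_symmetric)
  ultimately show False
    using assms(1) ordIso_ordLeq_trans not_ordLess_ordLeq by blast
qed

section \<open>A well-order of the reals of type continuum\<close>

definition wo_real :: "real rel" where
  "wo_real = |UNIV::real set|"

lemma Field_wo_real: "Field wo_real = UNIV"
  by (simp add: wo_real_def Field_card_of)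

lemma wo_rel_wo_real: "wo_rel wo_real"
  by (simp add: wo_real_def wo_rel_def card_of_Well_order)

lemma wf_wo_real: "wf (wo_real - Id)"
  using wo_rel_wo_real by (simp add: wo_rel_def well_order_on_def)

lemma small_underS: "small (underS wo_real a)"
  unfolding wo_real_def by (rule card_of_underS[OF card_of_Card_order]) (simp add: Field_card_of)

lemma small_under: "small (under wo_real a)"
proof -
  have "under wo_real a \<subseteq> underS wo_real a \<union> {a}" by (auto simp: under_def underS_def)
  moreover have "small (underS wo_real a \<union> {a})" by (intro small_Un small_underS small_finite) simp
  ultimately show ?thesis by (rule small_subset)
qed

lemma wo_real_total: "(a, b) \<in> wo_real \<or> (b, a) \<in> wo_real"
  using wo_rel.TOTALS[OF wo_rel_wo_real] by (simp add: Field_wo_real)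

lemma wo_real_not_underS: "t \<notin> underS wo_real s \<Longrightarrow> (s, t) \<in> wo_real"
  using wo_real_total by (auto simp: underS_def)

lemma wo_real_finite_greatest:
  "finite S \<Longrightarrow> S \<noteq> {} \<Longrightarrow> \<exists>a\<in>S. \<forall>b\<in>S. (b, a) \<in> wo_real"
proof (induction S rule: finite_ne_induct)
  case (singleton x) thus ?case using wo_real_total by auto
next
  case (insert x F)
  then obtain a where a: "a \<in> F" "\<forall>b\<in>F. (b, a) \<in> wo_real" by blast
  show ?case
  proof (cases "(x, a) \<in> wo_real")
    case True
    thus ?thesis using a by auto
  next
    case False
    hence "(a, x) \<in> wo_real" using wo_real_total by blast
    thus ?thesis
      using a wo_real_total wo_rel.TRANS[OF wo_rel_wo_real] by (auto dest: transD)
  qed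
qed

section \<open>The subring generated by a set of reals\<close>

primrec subring_hull_level :: "real set \<Rightarrow> nat \<Rightarrow> real set" where
  "subring_hull_level X 0 = X \<union> range real_of_int"
| "subring_hull_level X (Suc n) =
     subring_hull_level X n
     \<union> (\<lambda>(a, b). a + b) ` (subring_hull_level X n \<times> subring_hull_level X n)
     \<union> (\<lambda>(a, b). a * b) ` (subring_hull_level X n \<times> subring_hull_level X n)"

definition subring_hull :: "real set \<Rightarrow> real set" where
  "subring_hull X = (\<Union>n. subring_hull_level X n)"

lemma subring_hull_level_mono: "m \<le> n \<Longrightarrow> subring_hull_level X m \<subseteq> subring_hull_level X n"
  by (rule lift_Suc_mono_le[of "subring_hull_level X"]) auto

lemma subring_hull_common_level:
  assumes "a \<in> subring_hull X" "b \<in> subring_hull X"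
  obtains n where "a \<in> subring_hull_level X n" "b \<in> subring_hull_level X n"
proof -
  obtain m n where "a \<in> subring_hull_level X m" "b \<in> subring_hull_level X n"
    using assms by (auto simp: subring_hull_def)
  thus thesis
    using that subring_hull_level_mono[of _ "max m n" X] by (meson max.cobounded1 max.cobounded2 subsetD)
qed

lemma subring_hull_add: "a \<in> subring_hull X \<Longrightarrow> b \<in> subring_hull X \<Longrightarrow> a + b \<in> subring_hull X"
  by (erule (1) subring_hull_common_level, unfold subring_hull_def)
    (rule UN_I[of "Suc _"], auto intro!: image_eqI[of _ _ "(a, b)"])

lemma subring_hull_mult: "a \<in> subring_hull X \<Longrightarrow> b \<in> subring_hull X \<Longrightarrow> a * b \<in> subring_hull X"
  by (erule (1) subring_hull_common_level, unfold subring_hull_def)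
    (rule UN_I[of "Suc _"], auto intro!: image_eqI[of _ _ "(a, b)"])

lemma subring_hull_inc: "a \<in> X \<Longrightarrow> a \<in> subring_hull X"
  by (auto simp: subring_hull_def intro!: exI[of _ "0::nat"])

lemma subring_hull_of_int: "real_of_int i \<in> subring_hull X"
  by (auto simp: subring_hull_def intro!: exI[of _ "0::nat"])

lemma subring_hull_0: "0 \<in> subring_hull X"
  using subring_hull_of_int[of 0] by simp

lemma subring_hull_1: "1 \<in> subring_hull X"
  using subring_hull_of_int[of 1] by simp

lemma subring_hull_uminus: "a \<in> subring_hull X \<Longrightarrow> - a \<in> subring_hull X"
  using subring_hull_mult[OF subring_hull_of_int[of "-1"]] by simp

lemma subring_hull_sum:
  "finite S \<Longrightarrow> (\<And>i. i \<in> S \<Longrightarrow> f i \<in> subring_hull X) \<Longrightarrow> sum f S \<in> subring_hull X"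
  by (induction S rule: finite_induct) (auto simp: subring_hull_0 subring_hull_add)

lemma subring_hull_prod:
  "finite S \<Longrightarrow> (\<And>i. i \<in> S \<Longrightarrow> f i \<in> subring_hull X) \<Longrightarrow> prod f S \<in> subring_hull X"
  by (induction S rule: finite_induct) (auto simp: subring_hull_1 subring_hull_mult)

lemma subring_hull_power: "a \<in> subring_hull X \<Longrightarrow> a ^ n \<in> subring_hull X"
  by (induction n) (auto simp: subring_hull_1 subring_hull_mult)

lemma subring_hull_mono: "X \<subseteq> Y \<Longrightarrow> subring_hull X \<subseteq> subring_hull Y"
proof -
  assume "X \<subseteq> Y"
  hence "subring_hull_level X n \<subseteq> subring_hull_level Y n" for n
    by (induction n) (auto 0 4)
  thus ?thesis by (auto simp: subring_hull_def)
qed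

lemma infinite_subring_hull_level_0: "\<not> finite (subring_hull_level X 0)"
  using finite_imageD[of real_of_int UNIV] by (auto simp: inj_on_def)

lemma infinite_subring_hull: "\<not> finite (subring_hull X)"
proof
  assume "finite (subring_hull X)"
  hence "finite (subring_hull_level X 0)"
    by (rule finite_subset[rotated]) (auto intro: subring_hull_inc subring_hull_of_int)
  thus False using infinite_subring_hull_level_0 by blast
qed

lemma small_subring_hull:
  assumes "small X"
  shows "small (subring_hull X)"
proof -
  let ?B = "subring_hull_level X 0"
  have inf: "\<not> finite (Field |?B| )"
    using infinite_subring_hull_level_0 by (simp add: Field_card_of)
  note cB = card_of_Card_order[of ?B]
  have level_le: "|subring_hull_level X n| \<le>o |?B|" for n
  proof (induction n)
    case 0 show ?case using ordLeq_refl[OF cB] by simp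
  next
    case (Suc n)
    let ?L = "subring_hull_level X n"
    have "|?L \<times> ?L| \<le>o |?B|"
      using card_of_Times_ordLeq_infinite_Field[OF inf Suc Suc cB] .
    hence "|(\<lambda>(a, b). a + b) ` (?L \<times> ?L)| \<le>o |?B|" "|(\<lambda>(a, b). a * b) ` (?L \<times> ?L)| \<le>o |?B|"
      using card_of_image ordLeq_transitive by blast+
    thus ?case
      using card_of_Un_ordLeq_infinite_Field[OF inf card_of_Un_ordLeq_infinite_Field[OF inf Suc] _ cB]
        cB by simp
  qed
  have "|subring_hull X| \<le>o |?B|"
    unfolding subring_hull_def
    by (rule card_of_UNION_ordLeq_infinite[OF infinite_subring_hull_level_0])
      (use infinite_subring_hull_level_0 infinite_iff_card_of_nat level_le in auto)
  moreover have "small ?B"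
    using small_Un[OF assms countable_small[of "range real_of_int"]] by simp
  ultimately show ?thesis using ordLeq_ordLess_trans by blast
qed

section \<open>Reals algebraic over a set of coefficients\<close>

definition algebraic_over :: "real set \<Rightarrow> real \<Rightarrow> bool" where
  "algebraic_over R z \<longleftrightarrow> (\<exists>p::real poly. p \<noteq> 0 \<and> (\<forall>k. coeff p k \<in> R) \<and> poly p z = 0)"

lemma card_of_polys_degree_le:
  assumes "\<not> finite R"
  shows "|{p::real poly. (\<forall>k. coeff p k \<in> R) \<and> degree p \<le> n}| \<le>o |R|"
proof (induction n)
  case 0
  have "{p::real poly. (\<forall>k. coeff p k \<in> R) \<and> degree p \<le> 0} \<subseteq> (\<lambda>a. [:a:]) ` R"
    by (auto elim!: degree_eq_zeroE dest: spec[of _ 0])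
  thus ?case using card_of_mono1 card_of_image ordLeq_transitive by blast
next
  case (Suc n)
  let ?P = "\<lambda>n. {p::real poly. (\<forall>k. coeff p k \<in> R) \<and> degree p \<le> n}"
  have "?P (Suc n) \<subseteq> (\<lambda>(a, q). pCons a q) ` (R \<times> ?P n)"
  proof
    fix p assume p: "p \<in> ?P (Suc n)"
    obtain a q where pq: "p = pCons a q" by (cases p)
    have "a \<in> R" "\<forall>k. coeff q k \<in> R" "degree q \<le> n"
      using p pq by (auto dest: spec[of _ 0] spec[of _ "Suc k" for k] split: if_splits)
    thus "p \<in> (\<lambda>(a, q). pCons a q) ` (R \<times> ?P n)" using pq by auto
  qed
  hence "|?P (Suc n)| \<le>o |R \<times> ?P n|"
    using card_of_mono1 card_of_image ordLeq_transitive by blast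
  moreover have "|R \<times> ?P n| \<le>o |R|"
    using assms
    by (intro card_of_Times_ordLeq_infinite_Field[OF _ ordLeq_refl[OF card_of_Card_order] Suc
          card_of_Card_order]) (simp add: Field_card_of)
  ultimately show ?case by (rule ordLeq_transitive)
qed

lemma small_algebraic_over:
  assumes "small R" "\<not> finite R"
  shows "small {z. algebraic_over R z}"
proof -
  define P where "P = (\<Union>n. {p::real poly. (\<forall>k. coeff p k \<in> R) \<and> degree p \<le> n}) - {0}"
  have "|P| \<le>o |R|"
  proof -
    have "|\<Union>n. {p::real poly. (\<forall>k. coeff p k \<in> R) \<and> degree p \<le> n}| \<le>o |R|"
      using assms(2) card_of_polys_degree_le
      by (intro card_of_UNION_ordLeq_infinite) (auto simp: infinite_iff_card_of_nat)
    thus ?thesis using card_of_mono1[of P] ordLeq_transitive by (auto simp: P_def)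
  qed
  moreover have "|{z. poly p z = 0}| \<le>o |R|" if "p \<in> P" for p
    using that assms(2) poly_roots_finite[of p]
    by (intro ordLess_imp_ordLeq finite_ordLess_infinite[OF card_of_Well_order card_of_Well_order])
      (auto simp: P_def Field_card_of)
  ultimately have "|\<Union>p\<in>P. {z. poly p z = 0}| \<le>o |R|"
    using assms(2) by (intro card_of_UNION_ordLeq_infinite) auto
  moreover have "{z. algebraic_over R z} \<subseteq> (\<Union>p\<in>P. {z. poly p z = 0})"
    by (auto simp: algebraic_over_def P_def)
  ultimately show ?thesis
    using assms(1) card_of_mono1 ordLeq_transitive ordLeq_ordLess_trans by metis
qed

lemma coeffs_zero_if_not_algebraic_over:
  assumes "\<not> algebraic_over R z" "0 \<in> R" "finite D" "\<forall>k\<in>D. q k \<in> R"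
    and "(\<Sum>k\<in>D. q k * z ^ k) = 0"
  shows "\<forall>k\<in>D. q k = 0"
proof -
  define p where "p = (\<Sum>k\<in>D. monom (q k) k)"
  have coeff_p: "coeff p j = (if j \<in> D then q j else 0)" for j
    using assms(3) by (simp add: p_def coeff_sum coeff_monom)
  have "poly p z = 0" using assms(5) by (simp add: p_def poly_sum poly_monom)
  moreover have "\<forall>k. coeff p k \<in> R" using coeff_p assms(2,4) by auto
  ultimately have "p = 0" using assms(1) by (auto simp: algebraic_over_def)
  thus ?thesis using coeff_p by (metis coeff_0)
qed

section \<open>Sequences algebraically independent along the well-order\<close>

definition independent_along :: "real set \<Rightarrow> (real \<Rightarrow> real) \<Rightarrow> bool" where
  "independent_along X \<Phi> \<longleftrightarrow>
     (\<forall>y. \<not> algebraic_over (subring_hull (X \<union> \<Phi> ` underS wo_real y)) (\<Phi> y))"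

definition indep_seq :: "real set \<Rightarrow> real \<Rightarrow> real" where
  "indep_seq X = wfrec (wo_real - Id)
     (\<lambda>\<Phi> y. SOME z. \<not> algebraic_over (subring_hull (X \<union> \<Phi> ` underS wo_real y)) z)"

lemma independent_along_indep_seq:
  assumes "small X"
  shows "independent_along X (indep_seq X)"
  unfolding independent_along_def
proof
  fix y
  let ?R = "subring_hull (X \<union> indep_seq X ` underS wo_real y)"
  have "cut (indep_seq X) (wo_real - Id) y ` underS wo_real y = indep_seq X ` underS wo_real y"
    by (intro image_cong refl) (auto simp: cut_apply underS_def)
  hence eq: "indep_seq X y = (SOME z. \<not> algebraic_over ?R z)"
    by (subst indep_seq_def, subst wfrec[OF wf_wo_real], fold indep_seq_def) simp
  have "small ?R"
    using small_subring_hull small_Un[OF assms small_image[OF small_underS]] by blast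
  hence "small {z. algebraic_over ?R z}"
    using small_algebraic_over infinite_subring_hull by blast
  hence "\<exists>z. \<not> algebraic_over ?R z"
    using eqpoll_UNIV_not_subset_small[of _ UNIV] by blast
  thus "\<not> algebraic_over ?R (indep_seq X y)" unfolding eq by (rule someI_ex)
qed

lemma sum_monomials_split_var:
  fixes f :: "'k \<Rightarrow> 'a::comm_semiring_1"
  assumes "finite M" "finite V" "a \<in> V"
  shows "(\<Sum>m\<in>M. c m * (\<Prod>b\<in>V. f b ^ m b)) =
    (\<Sum>k\<in>(\<lambda>m. m a) ` M. (\<Sum>m\<in>{m\<in>M. m a = k}. c m * (\<Prod>b\<in>V - {a}. f b ^ m b)) * f a ^ k)"
proof -
  have "(\<Sum>m\<in>M. c m * (\<Prod>b\<in>V. f b ^ m b)) = (\<Sum>m\<in>M. c m * (\<Prod>b\<in>V - {a}. f b ^ m b) * f a ^ m a)"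
    using assms(2,3) by (simp add: prod.remove mult_ac)
  also have "\<dots> = (\<Sum>k\<in>(\<lambda>m. m a) ` M. \<Sum>m\<in>{m\<in>M. m a = k}. c m * (\<Prod>b\<in>V - {a}. f b ^ m b) * f a ^ m a)"
    using assms(1) by (intro sum.group[symmetric]) auto
  also have "\<dots> = (\<Sum>k\<in>(\<lambda>m. m a) ` M. (\<Sum>m\<in>{m\<in>M. m a = k}. c m * (\<Prod>b\<in>V - {a}. f b ^ m b)) * f a ^ k)"
    by (auto simp: sum_distrib_right intro!: sum.cong)
  finally show ?thesis .
qed

text \<open>
  The induction removes the variable whose index is greatest in the well-order; all other
  variables and the coefficients then lie in the ring over which that variable is
  transcendental. Grouping monomials that agree on \<open>V\<close> avoids renaming exponent vectors.
\<close>
lemma independent_along_sum_zero: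
  assumes "independent_along X \<Phi>"
  shows "finite V \<Longrightarrow> inj_on \<rho> V \<Longrightarrow> finite M \<Longrightarrow> \<forall>m\<in>M. c m \<in> subring_hull X
    \<Longrightarrow> (\<Sum>m\<in>M. c m * (\<Prod>b\<in>V. \<Phi> (\<rho> b) ^ m b)) = 0
    \<Longrightarrow> m \<in> M \<Longrightarrow> (\<Sum>m'\<in>{m'\<in>M. \<forall>b\<in>V. m' b = m b}. c m') = 0"
proof (induction "card V" arbitrary: V M m rule: less_induct)
  case less
  note fin_V = less.prems(1) and inj = less.prems(2) and fin_M = less.prems(3)
    and c_in = less.prems(4) and sum_zero = less.prems(5) and m_in = less.prems(6)
  show ?case
  proof (cases "V = {}")
    case True
    thus ?thesis using sum_zero by simp
  next
    case False
    obtain a where a: "a \<in> V" "\<forall>b\<in>V. (\<rho> b, \<rho> a) \<in> wo_real"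
      using wo_real_finite_greatest[of "\<rho> ` V"] fin_V False by auto
    define V' where "V' = V - {a}"
    define R where "R = subring_hull (X \<union> \<Phi> ` underS wo_real (\<rho> a))"
    define q where "q k = (\<Sum>m\<in>{m\<in>M. m a = k}. c m * (\<Prod>b\<in>V'. \<Phi> (\<rho> b) ^ m b))" for k
    have "\<rho> b \<in> underS wo_real (\<rho> a)" if "b \<in> V'" for b
      using that a inj by (auto simp: V'_def underS_def dest: inj_onD)
    hence "\<Phi> (\<rho> b) \<in> R" if "b \<in> V'" for b
      using that by (auto simp: R_def intro: subring_hull_inc)
    moreover have "c m \<in> R" if "m \<in> M" for m
      using that c_in subring_hull_mono[of X "X \<union> \<Phi> ` underS wo_real (\<rho> a)"]
      by (auto simp: R_def)
    ultimately have "q k \<in> R" for k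
      using fin_M fin_V unfolding q_def V'_def R_def
      by (intro subring_hull_sum subring_hull_mult subring_hull_prod subring_hull_power) auto
    moreover have "(\<Sum>k\<in>(\<lambda>m. m a) ` M. q k * \<Phi> (\<rho> a) ^ k) = 0"
      using sum_zero sum_monomials_split_var[OF fin_M fin_V a(1), of c "\<lambda>b. \<Phi> (\<rho> b)"]
      by (simp add: q_def V'_def)
    ultimately have "q (m a) = 0"
      using coeffs_zero_if_not_algebraic_over[of R "\<Phi> (\<rho> a)" "(\<lambda>m. m a) ` M" q]
        assms fin_M m_in subring_hull_0
      by (auto simp: independent_along_def R_def)
    moreover have "card V' < card V"
      unfolding V'_def by (rule card_Diff1_less[OF fin_V a(1)])
    ultimately have "(\<Sum>m'\<in>{m'\<in>M. m' a = m a \<and> (\<forall>b\<in>V'. m' b = m b)}. c m') = 0"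
      using less.hyps[of V' "{m'\<in>M. m' a = m a}" m] fin_V fin_M inj c_in m_in
      by (auto simp: V'_def q_def inj_on_diff)
    moreover have "{m'\<in>M. m' a = m a \<and> (\<forall>b\<in>V'. m' b = m b)} = {m'\<in>M. \<forall>b\<in>V. m' b = m b}"
      using a(1) by (auto simp: V'_def)
    ultimately show ?thesis by simp
  qed
qed

definition poly_vars :: "(('k \<Rightarrow> nat) \<Rightarrow> real) \<Rightarrow> 'k set" where
  "poly_vars c = (\<Union>m\<in>{m. c m \<noteq> 0}. {a. m a \<noteq> 0})"

lemma finite_poly_vars: "c \<in> polys K \<Longrightarrow> finite (poly_vars c)"
  by (auto simp: poly_vars_def polys_def monomials_def)

lemma poly_vars_subset: "c \<in> polys K \<Longrightarrow> poly_vars c \<subseteq> K"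
  by (auto simp: poly_vars_def polys_def monomials_def)

lemma independent_along_eval_poly_neq:
  fixes c :: "('k \<Rightarrow> nat) \<Rightarrow> real" and x :: "'k \<Rightarrow> real \<Rightarrow> real"
  assumes indep: "independent_along X \<Phi>"
    and c: "c \<in> polys K" "c \<noteq> (\<lambda>_. 0)" "\<forall>m. c m \<noteq> 0 \<longrightarrow> c m \<in> subring_hull X"
    and inj: "inj_on \<rho> (poly_vars c)" and x: "\<forall>a\<in>poly_vars c. x a t = \<Phi> (\<rho> a)"
    and w: "w \<in> subring_hull X"
  shows "eval_poly x c t \<noteq> w"
proof
  assume eval: "eval_poly x c t = w"
  define S where "S = {m. c m \<noteq> 0}"
  define V where "V = poly_vars c"
  define zero :: "'k \<Rightarrow> nat" where "zero = (\<lambda>_. 0)"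
  define c' where "c' = c(zero := - w)"
  have fin_S: "finite S" and S_mono: "S \<subseteq> monomials K"
    using c(1) by (auto simp: polys_def S_def)
  hence zero_S: "zero \<notin> S" by (auto simp: monomials_def zero_def)
  obtain m1 where m1: "m1 \<in> S" using c(2) by (auto simp: S_def)
  have supp: "{a. m a \<noteq> 0} \<subseteq> V" if "m \<in> insert zero S" for m
    using that by (auto simp: V_def S_def poly_vars_def zero_def)
  have mono_eq: "(\<Prod>b\<in>V. \<Phi> (\<rho> b) ^ m b) = eval_mono x m t" if "m \<in> S" for m
  proof -
    have "(\<Prod>b\<in>V. \<Phi> (\<rho> b) ^ m b) = (\<Prod>b\<in>V. x b t ^ m b)"
      using x by (simp add: V_def)
    also have "\<dots> = eval_mono x m t"
      unfolding eval_mono_def using supp[of m] that finite_poly_vars[OF c(1)]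
      by (intro prod.mono_neutral_right) (auto simp: V_def)
    finally show ?thesis .
  qed
  have "(\<Sum>m\<in>S. c' m * (\<Prod>b\<in>V. \<Phi> (\<rho> b) ^ m b)) = eval_poly x c t"
    unfolding eval_poly_def S_def[symmetric] using zero_S mono_eq
    by (intro sum.cong) (auto simp: c'_def)
  hence "(\<Sum>m\<in>insert zero S. c' m * (\<Prod>b\<in>V. \<Phi> (\<rho> b) ^ m b)) = 0"
    using fin_S zero_S eval by (simp add: c'_def zero_def)
  moreover have "\<forall>m\<in>insert zero S. c' m \<in> subring_hull X"
    using c(3) w by (auto simp: c'_def S_def subring_hull_uminus)
  ultimately have "(\<Sum>m'\<in>{m'\<in>insert zero S. \<forall>b\<in>V. m' b = m1 b}. c' m') = 0"
    using finite_poly_vars[OF c(1)] inj fin_S m1 unfolding V_def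
    by (intro independent_along_sum_zero[OF indep]) auto
  moreover have "m' = m1" if "m' \<in> insert zero S" "\<forall>b\<in>V. m' b = m1 b" for m'
  proof
    fix b
    show "m' b = m1 b"
    proof (cases "b \<in> V")
      case False
      hence "m' b = 0" "m1 b = 0" using supp[of m'] supp[of m1] that(1) m1 by blast+
      thus ?thesis by simp
    qed (use that in auto)
  qed
  hence "{m'\<in>insert zero S. \<forall>b\<in>V. m' b = m1 b} = {m1}" using m1 by auto
  ultimately have "c' m1 = 0" by simp
  thus False using m1 zero_S by (auto simp: c'_def S_def split: if_splits)
qed

section \<open>Coding Borel functions by reals\<close>

datatype borel_code = BEmpty | BLess nat | BCompl borel_code | BUnion "nat \<Rightarrow> borel_code"

abbreviation nth_rat :: "nat \<Rightarrow> real" where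
  "nth_rat n \<equiv> of_rat (from_nat n)"

primrec code_set :: "borel_code \<Rightarrow> real set" where
  "code_set BEmpty = {}"
| "code_set (BLess n) = {..< nth_rat n}"
| "code_set (BCompl c) = - code_set c"
| "code_set (BUnion f) = (\<Union>i. code_set (f i))"

lemma borel_set_has_code:
  assumes "B \<in> sets (borel :: real measure)"
  shows "\<exists>c. code_set c = B"
proof -
  have "B \<in> sigma_sets UNIV (range lessThan)"
    using assms by (simp add: borel_Iio sets_measure_of)
  thus ?thesis
  proof (induction rule: sigma_sets.induct)
    case (Basic a)
    then obtain x :: real where x: "a = {..<x}" by blast
    have "code_set (BUnion (\<lambda>i. if nth_rat i < x then BLess i else BEmpty)) = {..<x}"
    proof (intro set_eqI iffI)
      fix t assume "t \<in> {..<x}"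
      then obtain r where "t < of_rat r" "of_rat r < x" using of_rat_dense by auto
      thus "t \<in> code_set (BUnion (\<lambda>i. if nth_rat i < x then BLess i else BEmpty))"
        by (auto intro!: exI[of _ "to_nat r"])
    qed (auto split: if_splits)
    thus ?case using x by blast
  next
    case Empty
    show ?case by (intro exI[of _ BEmpty]) simp
  next
    case (Compl a)
    then obtain c where "code_set c = a" by blast
    thus ?case by (intro exI[of _ "BCompl c"]) auto
  next
    case (Union a)
    then obtain f where "\<And>i. code_set (f i) = a i" by metis
    thus ?case by (intro exI[of _ "BUnion f"]) auto
  qed
qed

text \<open>A sequence of codes describes the sublevel sets \<open>{f < q\<^sub>n}\<close> of a function \<open>f\<close>.\<close>
definition code_fun :: "(nat \<Rightarrow> borel_code) \<Rightarrow> real \<Rightarrow> real" where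
  "code_fun \<phi> t = Inf {nth_rat n | n. t \<in> code_set (\<phi> n)}"

lemma Inf_rationals_above: "Inf {of_rat q | q. x < of_rat q} = (x::real)"
proof -
  let ?S = "{of_rat q | q. x < of_rat q} :: real set"
  have "?S \<noteq> {}" using of_rat_dense[of x "x + 1"] by auto
  hence "x \<le> Inf ?S" by (rule cInf_greatest) auto
  moreover have "\<not> x < Inf ?S"
  proof
    assume "x < Inf ?S"
    then obtain r where r: "x < of_rat r" "of_rat r < Inf ?S" using of_rat_dense by blast
    hence "Inf ?S \<le> of_rat r" by (intro cInf_lower bdd_belowI[of _ x]) auto
    thus False using r by simp
  qed
  ultimately show ?thesis by simp
qed

lemma measurable_restrict_eq_code_fun:
  assumes f: "f \<in> measurable (restrict_space borel Z) borel"
  shows "\<exists>\<phi>. \<forall>t\<in>Z. f t = code_fun \<phi> t"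
proof -
  have "\<exists>c. \<forall>t\<in>Z. t \<in> code_set c \<longleftrightarrow> f t < nth_rat n" for n
  proof -
    have "f -` {..< nth_rat n} \<inter> space (restrict_space borel Z) \<in> sets (restrict_space borel Z)"
      by (rule measurable_sets[OF f]) simp
    then obtain B where B: "B \<in> sets (borel :: real measure)" "f -` {..< nth_rat n} \<inter> Z = Z \<inter> B"
      by (auto simp: sets_restrict_space space_restrict_space)
    obtain c where "code_set c = B" using borel_set_has_code[OF B(1)] by blast
    thus ?thesis using B(2) by blast
  qed
  then obtain \<phi> where \<phi>: "\<And>n. \<forall>t\<in>Z. t \<in> code_set (\<phi> n) \<longleftrightarrow> f t < nth_rat n"
    by metis
  have "f t = code_fun \<phi> t" if t: "t \<in> Z" for t
  proof -
    have "{nth_rat n | n. t \<in> code_set (\<phi> n)} = {of_rat q | q. f t < (of_rat q :: real)}"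
    proof (intro set_eqI iffI)
      fix v :: real assume "v \<in> {of_rat q | q. f t < of_rat q}"
      then obtain q where "v = of_rat q" "f t < of_rat q" by blast
      thus "v \<in> {nth_rat n | n. t \<in> code_set (\<phi> n)}"
        using \<phi> t by (intro CollectI exI[of _ "to_nat q"]) simp
    qed (use \<phi> t in blast)
    thus ?thesis by (simp add: code_fun_def Inf_rationals_above)
  qed
  thus ?thesis by blast
qed

text \<open>Codes are trees with countable branching, encoded as labelled paths \<open>nat list \<Rightarrow> nat\<close>.\<close>
primrec encode_code :: "borel_code \<Rightarrow> nat list \<Rightarrow> nat" where
  "encode_code BEmpty = (\<lambda>p. if p = [] then 1 else 0)"
| "encode_code (BLess n) = (\<lambda>p. if p = [] then n + 3 else 0)"
| "encode_code (BCompl c) = (\<lambda>p. case p of [] \<Rightarrow> 2 | i # q \<Rightarrow> encode_code c q)"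
| "encode_code (BUnion f) = (\<lambda>p. case p of [] \<Rightarrow> 0 | i # q \<Rightarrow> encode_code (f i) q)"

lemma inj_encode_code: "inj encode_code"
proof (rule injI)
  fix c d :: borel_code
  show "encode_code c = encode_code d \<Longrightarrow> c = d"
  proof (induction c arbitrary: d)
    case BEmpty
    from fun_cong[OF this, of "[]"] show ?case by (cases d) auto
  next
    case (BLess n)
    from fun_cong[OF this, of "[]"] show ?case by (cases d) auto
  next
    case (BCompl c)
    from fun_cong[OF BCompl.prems, of "[]"] obtain d' where d: "d = BCompl d'"
      by (cases d) auto
    have "encode_code c q = encode_code d' q" for q
      using fun_cong[OF BCompl.prems, of "0 # q"] d by simp
    thus ?case using BCompl.IH d by blast
  next
    case (BUnion f)
    from fun_cong[OF BUnion.prems, of "[]"] obtain g where d: "d = BUnion g"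
      by (cases d) auto
    have "encode_code (f i) q = encode_code (g i) q" for i q
      using fun_cong[OF BUnion.prems, of "i # q"] d by simp
    thus ?case using BUnion.IH d by blast
  qed
qed

lemma inj_graph_to_nat: "inj (\<lambda>F :: 'a::countable \<Rightarrow> 'b::countable. range (\<lambda>p. to_nat (p, F p)))"
proof (rule injI)
  fix F G :: "'a \<Rightarrow> 'b"
  assume eq: "range (\<lambda>p. to_nat (p, F p)) = range (\<lambda>p. to_nat (p, G p))"
  show "F = G"
  proof
    fix p
    have "to_nat (p, F p) \<in> range (\<lambda>p. to_nat (p, G p))" using eq by blast
    then obtain p' where "to_nat (p, F p) = to_nat (p', G p')" by blast
    thus "F p = G p" by (auto simp: inj_eq[OF inj_to_nat])
  qed
qed

lemma ex_inj_borel_codes_real: "\<exists>e :: (nat \<Rightarrow> borel_code) \<Rightarrow> real. inj e"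
proof -
  obtain h :: "nat set \<Rightarrow> real" where h: "bij h"
    using nat_sets_eqpoll_reals by (auto simp: eqpoll_def)
  have "inj (encode_code \<circ> BUnion)"
    by (rule inj_compose[OF inj_encode_code]) (simp add: inj_def)
  hence "inj ((\<lambda>F. range (\<lambda>p. to_nat (p, F p))) \<circ> encode_code \<circ> BUnion)"
    unfolding comp_assoc by (rule inj_compose[OF inj_graph_to_nat])
  hence "inj (h \<circ> (\<lambda>F. range (\<lambda>p. to_nat (p, F p))) \<circ> encode_code \<circ> BUnion)"
    unfolding comp_assoc by (rule inj_compose[OF bij_is_inj[OF h]])
  thus ?thesis by blast
qed

definition borel_fun :: "real \<Rightarrow> real \<Rightarrow> real" where
  "borel_fun s = code_fun (inv (SOME e :: (nat \<Rightarrow> borel_code) \<Rightarrow> real. inj e) s)"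

lemma measurable_restrict_eq_borel_fun:
  assumes "f \<in> measurable (restrict_space borel Z) borel"
  shows "\<exists>s. \<forall>t\<in>Z. f t = borel_fun s t"
proof -
  obtain \<phi> where "\<forall>t\<in>Z. f t = code_fun \<phi> t"
    using measurable_restrict_eq_code_fun[OF assms] by blast
  moreover have "inj (SOME e :: (nat \<Rightarrow> borel_code) \<Rightarrow> real. inj e)"
    using someI_ex[OF ex_inj_borel_codes_real] .
  ultimately show ?thesis by (metis borel_fun_def inv_f_f)
qed

section \<open>The free generators\<close>

definition stage_set :: "real \<Rightarrow> real set" where
  "stage_set t = under wo_real t \<union> (\<lambda>s. borel_fun s t) ` under wo_real t"

definition sz_basis :: "('k \<Rightarrow> real \<Rightarrow> real) \<Rightarrow> 'k \<Rightarrow> real \<Rightarrow> real" where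
  "sz_basis h \<zeta> t = indep_seq (stage_set t) (h \<zeta> t)"

lemma small_stage_set: "small (stage_set t)"
  unfolding stage_set_def by (rule small_Un[OF small_under small_image[OF small_under]])

lemma eval_poly_sz_basis_in_SZ:
  assumes small_eq: "\<forall>a\<in>K. \<forall>b\<in>K. a \<noteq> b \<longrightarrow> small {t. h a t = h b t}"
    and c: "c \<in> polys K" "c \<noteq> (\<lambda>_. 0)"
  shows "eval_poly (sz_basis h) c \<in> SZ"
  unfolding SZ_def
proof (intro CollectI allI impI notI)
  fix Z :: "real set"
  assume Z: "Z \<approx> (UNIV :: real set)"
    and "eval_poly (sz_basis h) c \<in> measurable (restrict_space borel Z) borel"
  then obtain s where s: "\<forall>t\<in>Z. eval_poly (sz_basis h) c t = borel_fun s t"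
    using measurable_restrict_eq_borel_fun by blast
  define V where "V = poly_vars c"
  define S where "S = {m. c m \<noteq> 0}"
  define bad where "bad = (\<Union>a\<in>V. \<Union>b\<in>V - {a}. {t. h a t = h b t})
    \<union> underS wo_real s \<union> (\<Union>m\<in>S. underS wo_real (c m))"
  have "finite V" and "V \<subseteq> K" and "finite S"
    using finite_poly_vars[OF c(1)] poly_vars_subset[OF c(1)] c(1)
    by (auto simp: V_def S_def polys_def)
  moreover have "small {t. h a t = h b t}" if "a \<in> V" "b \<in> V - {a}" for a b
    by (rule small_eq[rule_format]) (use that \<open>V \<subseteq> K\<close> in auto)
  ultimately have "small bad"
    unfolding bad_def by (intro small_Un small_UN_finite small_underS) auto
  from eqpoll_UNIV_not_subset_small[OF this Z] obtain t where t: "t \<in> Z" "t \<notin> bad"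
    by blast
  have "(s, t) \<in> wo_real"
    using t(2) wo_real_not_underS unfolding bad_def by blast
  hence fun_value: "borel_fun s t \<in> subring_hull (stage_set t)"
    by (auto simp: stage_set_def under_def intro!: subring_hull_inc)
  have "(c m, t) \<in> wo_real" if "m \<in> S" for m
    using t(2) that wo_real_not_underS unfolding bad_def by blast
  hence coeffs: "\<forall>m. c m \<noteq> 0 \<longrightarrow> c m \<in> subring_hull (stage_set t)"
    by (auto simp: stage_set_def under_def S_def intro!: subring_hull_inc)
  have "inj_on (\<lambda>a. h a t) (poly_vars c)"
    using t(2) unfolding bad_def V_def inj_on_def by blast
  moreover have "\<forall>a\<in>poly_vars c. sz_basis h a t = indep_seq (stage_set t) (h a t)"
    by (simp add: sz_basis_def)
  ultimately have "eval_poly (sz_basis h) c t \<noteq> borel_fun s t"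
    by (rule independent_along_eval_poly_neq[OF independent_along_indep_seq[OF small_stage_set]
          c coeffs _ _ fun_value])
  thus False using s t(1) by blast
qed

lemma zero_notin_SZ: "(\<lambda>_. 0) \<notin> SZ"
  by (auto simp: SZ_def intro!: exI[of _ UNIV])

lemma inj_on_if_eval_poly_nonzero:
  fixes x :: "'k \<Rightarrow> real \<Rightarrow> real" and K :: "'k set"
  assumes "\<forall>c\<in>polys K. c \<noteq> (\<lambda>_. 0) \<longrightarrow> eval_poly x c \<noteq> (\<lambda>_. 0)"
  shows "inj_on x K"
proof (rule inj_onI, rule ccontr)
  fix a b assume a: "a \<in> K" and b: "b \<in> K" and "x a = x b" and ab: "a \<noteq> b"
  define var :: "'k \<Rightarrow> 'k \<Rightarrow> nat" where "var z = (\<lambda>w. if w = z then 1 else 0)" for z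
  define c where "c m = (if m = var a then 1 else if m = var b then -1 else (0::real))" for m
  have var_neq: "var a \<noteq> var b" using ab by (auto simp: var_def fun_eq_iff)
  have supp_c: "{m. c m \<noteq> 0} = {var a, var b}" using var_neq by (auto simp: c_def)
  have supp_var: "{w. var z w \<noteq> 0} = {z}" for z by (auto simp: var_def)
  have "c \<in> polys K"
    using a b by (auto simp: polys_def monomials_def supp_c supp_var fun_eq_iff var_def)
  moreover have "c \<noteq> (\<lambda>_. 0)" by (auto simp: c_def fun_eq_iff)
  moreover have "eval_poly x c t = x a t - x b t" for t
  proof -
    have "eval_mono x (var z) t = x z t" for z
      by (simp add: eval_mono_def supp_var) (simp add: var_def)
    moreover have "c (var a) = 1" "c (var b) = -1" using var_neq by (simp_all add: c_def)
    ultimately show ?thesis using var_neq by (simp add: eval_poly_def supp_c)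
  qed
  ultimately show False using assms \<open>x a = x b\<close> by auto
qed

lemma almost_disjoint_injections:
  fixes N :: "'k \<Rightarrow> real set"
  assumes "\<forall>\<zeta>\<in>K. N \<zeta> \<approx> (UNIV :: real set)"
    and "\<forall>\<zeta>\<in>K. \<forall>\<eta>\<in>K. \<zeta> \<noteq> \<eta> \<longrightarrow> N \<zeta> \<inter> N \<eta> \<prec> (UNIV :: real set)"
  obtains h :: "'k \<Rightarrow> real \<Rightarrow> real" where "\<forall>a\<in>K. \<forall>b\<in>K. a \<noteq> b \<longrightarrow> small {t. h a t = h b t}"
proof -
  have "\<forall>\<zeta>\<in>K. \<exists>g :: real \<Rightarrow> real. inj g \<and> range g \<subseteq> N \<zeta>"
    using assms(1) bij_betw_inv_into by (fastforce simp: eqpoll_def bij_betw_def)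
  then obtain h :: "'k \<Rightarrow> real \<Rightarrow> real" where h: "\<And>\<zeta>. \<zeta> \<in> K \<Longrightarrow> inj (h \<zeta>) \<and> range (h \<zeta>) \<subseteq> N \<zeta>"
    by metis
  have "small {t. h a t = h b t}" if "a \<in> K" "b \<in> K" "a \<noteq> b" for a b
  proof -
    have "inj_on (h a) {t. h a t = h b t}" using h[OF that(1)] inj_on_subset by blast
    moreover have "h a ` {t. h a t = h b t} \<subseteq> N a \<inter> N b"
      using h[OF that(1)] h[OF that(2)] by (auto simp: image_subset_iff) (metis rangeI subsetD)
    ultimately have "|{t. h a t = h b t}| \<le>o |N a \<inter> N b|"
      using card_of_ordLeq by blast
    moreover have "small (N a \<inter> N b)" using assms(2) that lesspoll_small by blast
    ultimately show ?thesis using ordLeq_ordLess_trans by blast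
  qed
  thus thesis using that by blast
qed

theorem theorem2p6:
  fixes K :: "'k set" and N :: "'k \<Rightarrow> real set"
  assumes "\<forall>\<zeta>\<in>K. eqpoll (N \<zeta>) (UNIV :: real set)"
    and "\<forall>\<zeta>\<in>K. \<forall>\<eta>\<in>K. \<zeta> \<noteq> \<eta> \<longrightarrow> lesspoll (N \<zeta> \<inter> N \<eta>) (UNIV :: real set)"
  shows "strongly_algebrable SZ K"
proof -
  obtain h :: "'k \<Rightarrow> real \<Rightarrow> real" where h: "\<forall>a\<in>K. \<forall>b\<in>K. a \<noteq> b \<longrightarrow> small {t. h a t = h b t}"
    using almost_disjoint_injections[OF assms] .
  have in_SZ: "\<forall>c\<in>polys K. c \<noteq> (\<lambda>_. 0) \<longrightarrow> eval_poly (sz_basis h) c \<in> SZ"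
    using eval_poly_sz_basis_in_SZ[OF h] by blast
  hence "\<forall>c\<in>polys K. c \<noteq> (\<lambda>_. 0) \<longrightarrow> eval_poly (sz_basis h) c \<noteq> (\<lambda>_. 0)"
    using zero_notin_SZ by metis
  thus ?thesis
    unfolding strongly_algebrable_def using in_SZ inj_on_if_eval_poly_nonzero by blast
qed

end
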